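(* Fix $p\ge1$, $\beta\in\mathbb R^p$, $\sigma^2>0$ and $\alpha_0\in(0,1)$; let $(X_n)$ be a fixed sequence of full-column-rank design matrices with $p$ columns, $Y_n=X_n\beta+\epsilon_n$ with $\epsilon_n\sim\mathcal N(0,\sigma^2I)$, and $$E_1:=\Big\{Y:\ \tfrac{n-p-1}{p}\cdot\tfrac{Y^\top P_{X_n}Y}{Y^\top(I-P_{X_n})Y}\ge F^{-1}_{p,n-p-1}(1-\alpha_0)\Big\}.$$ Suppose $f$ is a real-valued function of $Y_n$ such that $\Pr(f(Y_n)>\varepsilon)\to0$ as $n\to\infty$ for every $\varepsilon>0$. Then $\Pr(f(Y_n)>\varepsilon\mid Y_n\in E_1)\to0$ for every $\varepsilon>0$.
   Context: $P_A:=A(A^\top A)^{-1}A^\top$; $F_{a,b}$ is the CDF of the $F_{a,b}$ distribution. $E_1$ is the rejection event of the level-$\alpha_0$ overall $F$-test of $\beta_1=\dots=\beta_p=0$. *)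

theory Defs
  imports "HOL-Probability.Probability"
begin

text \<open>Design matrix X_n with n rows and p columns, p = CARD('p) fixed:
  represented by its rows, X :: nat => real^'p, row i for i < n.\<close>

definition full_col_rank :: "nat \<Rightarrow> (nat \<Rightarrow> real^'p) \<Rightarrow> bool" where
  "full_col_rank n X \<longleftrightarrow> (\<forall>c::real^'p. (\<forall>i<n. X i \<bullet> c = 0) \<longrightarrow> c = 0)"

definition gram :: "nat \<Rightarrow> (nat \<Rightarrow> real^'p) \<Rightarrow> real^'p^'p" where
  "gram n X = (\<chi> j k. \<Sum>i<n. X i $ j * X i $ k)"

definition Xt_mult :: "nat \<Rightarrow> (nat \<Rightarrow> real^'p) \<Rightarrow> (nat \<Rightarrow> real) \<Rightarrow> real^'p" where
  "Xt_mult n X y = (\<Sum>i<n. y i *\<^sub>R X i)"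

text \<open>Y^T P_X Y = (X^T Y)^T (X^T X)^{-1} (X^T Y)\<close>
definition proj_quad :: "nat \<Rightarrow> (nat \<Rightarrow> real^'p) \<Rightarrow> (nat \<Rightarrow> real) \<Rightarrow> real" where
  "proj_quad n X y = Xt_mult n X y \<bullet> (matrix_inv (gram n X) *v Xt_mult n X y)"

definition resid_quad :: "nat \<Rightarrow> (nat \<Rightarrow> real^'p) \<Rightarrow> (nat \<Rightarrow> real) \<Rightarrow> real" where
  "resid_quad n X y = (\<Sum>i<n. (y i)\<^sup>2) - proj_quad n X y"

definition F_density :: "real \<Rightarrow> real \<Rightarrow> real \<Rightarrow> real" where
  "F_density a b x = (if x > 0 then
     (a / b) powr (a / 2) * x powr (a / 2 - 1) * (1 + a * x / b) powr (- (a + b) / 2)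
       / (Beta (a / 2) (b / 2) :: real)
   else 0)"

definition F_cdf :: "real \<Rightarrow> real \<Rightarrow> real \<Rightarrow> real" where
  "F_cdf a b t = (LINT x:{..t}|lborel. F_density a b x)"

definition F_quantile :: "real \<Rightarrow> real \<Rightarrow> real \<Rightarrow> real" where
  "F_quantile a b q = Inf {x. q \<le> F_cdf a b x}"

definition Ydist :: "nat \<Rightarrow> (nat \<Rightarrow> real^'p) \<Rightarrow> real^'p \<Rightarrow> real \<Rightarrow> (nat \<Rightarrow> real) measure" where
  "Ydist n X \<beta> \<sigma>2 = PiM {..<n} (\<lambda>i. density lborel (normal_density (X i \<bullet> \<beta>) (sqrt \<sigma>2)))"

definition F_stat :: "nat \<Rightarrow> (nat \<Rightarrow> real^'p) \<Rightarrow> (nat \<Rightarrow> real) \<Rightarrow> real" where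
  "F_stat n X y = (real n - real CARD('p) - 1) / real CARD('p) * (proj_quad n X y / resid_quad n X y)"

definition E1 :: "nat \<Rightarrow> (nat \<Rightarrow> real^'p) \<Rightarrow> real^'p \<Rightarrow> real \<Rightarrow> real \<Rightarrow> (nat \<Rightarrow> real) set" where
  "E1 n X \<beta> \<sigma>2 \<alpha>0 = {y \<in> space (Ydist n X \<beta> \<sigma>2).
     F_quantile (real CARD('p)) (real n - real CARD('p) - 1) (1 - \<alpha>0) \<le> F_stat n X y}"

definition cond_pr :: "'a measure \<Rightarrow> 'a set \<Rightarrow> 'a set \<Rightarrow> real" where
  "cond_pr M A B = measure M (A \<inter> B) / measure M B"

end

(*
  Since P(A | E1) <= P(A) / P(E1), it suffices that the power P(E1) of the F-test stays
  bounded away from 0, uniformly in n.  By Markov's inequality for the F distribution, whose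
  mean b / (b - 2) is at most 2 once b >= 4, the critical value is at most 2 / alpha0.
  Fix a direction u = X c in the column space.  Then Y' P_X Y >= (u' Y)^2 / |u|^2, and u' Y is
  normal with standard deviation sigma |u|, so whatever its mean, |u' Y| >= sigma |u| t with
  probability at least the standard normal tail at t = sqrt (6 p / alpha0).  The residual sum
  of squares is at most |Y - X beta|^2, which is <= 2 n sigma^2 except on an event of
  probability <= (sqrt 2 / exp (1/2))^n by a Chernoff bound; and it is almost surely
  positive, because Y has a nonzero component orthogonal to the column space almost surely.
  On the remaining event the F statistic exceeds 3 (n - p - 1) / (alpha0 n) >= 2 / alpha0
  as soon as n >= 3 p + 5.
*)
theory Submission
  imports Defs
begin

section \<open>Least squares\<close>

lemma gram_mult_vec: "gram n X *v c = (\<Sum>i<n. (X i \<bullet> c) *\<^sub>R X i)"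
  unfolding gram_def
  by (simp add: vec_eq_iff matrix_vector_mult_def inner_vec_def sum_distrib_left
      sum_distrib_right mult_ac sum_component) (intro allI sum.swap)

lemma inner_gram_mult_vec: "d \<bullet> (gram n X *v c) = (\<Sum>i<n. (X i \<bullet> d) * (X i \<bullet> c))"
  by (simp add: gram_mult_vec inner_sum_right inner_commute mult_ac)

lemma Xt_mult_inner: "Xt_mult n X y \<bullet> d = (\<Sum>i<n. y i * (X i \<bullet> d))"
  by (simp add: Xt_mult_def inner_sum_left)

lemma invertible_gram:
  assumes "full_col_rank n X"
  shows "invertible (gram n X)"
proof -
  have "c = 0" if "gram n X *v c = 0" for c
  proof -
    have "(\<Sum>i<n. (X i \<bullet> c)\<^sup>2) = 0"
      using inner_gram_mult_vec[of c n X c] that by (simp add: power2_eq_square)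
    then have "\<forall>i<n. X i \<bullet> c = 0"
      by (subst (asm) sum_nonneg_eq_0_iff) auto
    then show ?thesis using assms unfolding full_col_rank_def by blast
  qed
  then show ?thesis
    by (simp add: matrix_left_invertible_ker invertible_left_inverse)
qed

lemma gram_mult_matrix_inv:
  assumes "full_col_rank n X"
  shows "gram n X *v (matrix_inv (gram n X) *v z) = z"
proof -
  have "\<exists>A'. gram n X ** A' = mat 1 \<and> A' ** gram n X = mat 1"
    using invertible_gram[OF assms] by (simp add: invertible_def)
  then have "gram n X ** matrix_inv (gram n X) = mat 1"
    unfolding matrix_inv_def by (rule someI2_ex) auto
  then show ?thesis by (simp add: matrix_vector_mul_assoc)
qed

definition ols_coef :: "nat \<Rightarrow> (nat \<Rightarrow> real^'p) \<Rightarrow> (nat \<Rightarrow> real) \<Rightarrow> real^'p" where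
  "ols_coef n X y = matrix_inv (gram n X) *v Xt_mult n X y"

lemma ols_normal_equations:
  assumes "full_col_rank n X"
  shows "(\<Sum>i<n. (X i \<bullet> d) * (X i \<bullet> ols_coef n X y)) = (\<Sum>i<n. y i * (X i \<bullet> d))"
proof -
  have "(\<Sum>i<n. (X i \<bullet> d) * (X i \<bullet> ols_coef n X y)) = d \<bullet> (gram n X *v ols_coef n X y)"
    by (simp add: inner_gram_mult_vec)
  also have "\<dots> = Xt_mult n X y \<bullet> d"
    using gram_mult_matrix_inv[OF assms] by (simp add: ols_coef_def inner_commute)
  finally show ?thesis by (simp add: Xt_mult_inner)
qed

lemma proj_quad_eq_sum_fitted_sq:
  assumes "full_col_rank n X"
  shows "proj_quad n X y = (\<Sum>i<n. (X i \<bullet> ols_coef n X y)\<^sup>2)"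
  using ols_normal_equations[OF assms, of "ols_coef n X y" y]
  by (simp add: proj_quad_def Xt_mult_inner power2_eq_square flip: ols_coef_def)

lemma proj_quad_Cauchy_Schwarz:
  assumes "full_col_rank n X"
  shows "(\<Sum>i<n. y i * (X i \<bullet> c))\<^sup>2 \<le> proj_quad n X y * (\<Sum>i<n. (X i \<bullet> c)\<^sup>2)"
proof -
  have "(\<Sum>i<n. y i * (X i \<bullet> c)) = (\<Sum>i<n. (X i \<bullet> ols_coef n X y) * (X i \<bullet> c))"
    using ols_normal_equations[OF assms, of c y] by (simp add: mult_ac)
  also have "(\<dots>)\<^sup>2 \<le> (\<Sum>i<n. (X i \<bullet> ols_coef n X y)\<^sup>2) * (\<Sum>i<n. (X i \<bullet> c)\<^sup>2)"
    by (rule Cauchy_Schwarz_ineq_sum)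
  finally show ?thesis using proj_quad_eq_sum_fitted_sq[OF assms] by simp
qed

lemma resid_quad_eq_sum_resid_sq:
  assumes "full_col_rank n X"
  shows "resid_quad n X y = (\<Sum>i<n. (y i - X i \<bullet> ols_coef n X y)\<^sup>2)"
proof -
  let ?w = "ols_coef n X y"
  have "(\<Sum>i<n. (y i - X i \<bullet> ?w)\<^sup>2)
      = (\<Sum>i<n. (y i)\<^sup>2) - 2 * (\<Sum>i<n. y i * (X i \<bullet> ?w)) + (\<Sum>i<n. (X i \<bullet> ?w)\<^sup>2)"
    by (simp add: power2_diff sum.distrib sum_subtractf sum_distrib_left mult_ac)
  moreover have "(\<Sum>i<n. y i * (X i \<bullet> ?w)) = (\<Sum>i<n. (X i \<bullet> ?w)\<^sup>2)"
    using ols_normal_equations[OF assms, of ?w y] by (simp add: power2_eq_square)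
  ultimately show ?thesis
    using proj_quad_eq_sum_fitted_sq[OF assms, of y] by (simp add: resid_quad_def)
qed

lemma resid_quad_le_sum_sq:
  assumes "full_col_rank n X"
  shows "resid_quad n X y \<le> (\<Sum>i<n. (y i - X i \<bullet> b)\<^sup>2)"
proof -
  let ?w = "ols_coef n X y"
  define d where "d = ?w - b"
  have cross: "(\<Sum>i<n. (y i - X i \<bullet> ?w) * (X i \<bullet> d)) = 0"
    using ols_normal_equations[OF assms, of d y]
    by (simp add: algebra_simps sum_subtractf)
  have "y i - X i \<bullet> b = (y i - X i \<bullet> ?w) + X i \<bullet> d" for i
    by (simp add: d_def inner_diff_right)
  then have "(\<Sum>i<n. (y i - X i \<bullet> b)\<^sup>2) = (\<Sum>i<n. (y i - X i \<bullet> ?w)\<^sup>2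
      + (X i \<bullet> d)\<^sup>2 + 2 * (y i - X i \<bullet> ?w) * (X i \<bullet> d))"
    by (simp only: power2_sum)
  also have "\<dots> = (\<Sum>i<n. (y i - X i \<bullet> ?w)\<^sup>2) + (\<Sum>i<n. (X i \<bullet> d)\<^sup>2)
      + 2 * (\<Sum>i<n. (y i - X i \<bullet> ?w) * (X i \<bullet> d))"
    by (simp only: sum.distrib sum_distrib_left mult.assoc)
  also have "\<dots> = (\<Sum>i<n. (y i - X i \<bullet> ?w)\<^sup>2) + (\<Sum>i<n. (X i \<bullet> d)\<^sup>2)"
    using cross by simp
  also have "\<dots> \<ge> (\<Sum>i<n. (y i - X i \<bullet> ?w)\<^sup>2)"
    by (simp add: sum_nonneg)
  finally show ?thesis using resid_quad_eq_sum_resid_sq[OF assms] by simp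
qed

lemma resid_quad_pos:
  assumes "full_col_rank n X" "(\<Sum>i<n. v i *\<^sub>R X i) = 0" "(\<Sum>i<n. v i * y i) \<noteq> 0"
  shows "resid_quad n X y > 0"
proof -
  let ?w = "ols_coef n X y"
  have "\<exists>i<n. y i \<noteq> X i \<bullet> ?w"
  proof (rule ccontr)
    assume "\<not> (\<exists>i<n. y i \<noteq> X i \<bullet> ?w)"
    then have "(\<Sum>i<n. v i * y i) = (\<Sum>i<n. v i * (X i \<bullet> ?w))"
      by (intro sum.cong) auto
    also have "\<dots> = (\<Sum>i<n. v i *\<^sub>R X i) \<bullet> ?w"
      by (simp add: inner_sum_left)
    finally show False
      using assms(2,3) by simp
  qed
  then have "(\<Sum>i<n. (y i - X i \<bullet> ?w)\<^sup>2) \<noteq> 0"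
    by (subst sum_nonneg_eq_0_iff) auto
  then show ?thesis
    using resid_quad_eq_sum_resid_sq[OF assms(1), of y] by (simp add: less_le sum_nonneg)
qed

lemma exists_left_null_vector:
  fixes X :: "nat \<Rightarrow> real^'p"
  assumes "n > CARD('p)"
  shows "\<exists>v. (\<exists>i<n. v i \<noteq> 0) \<and> (\<Sum>i<n. v i *\<^sub>R X i) = 0"
proof (cases "inj_on X {..<n}")
  case False
  then obtain i j where ij: "i < n" "j < n" "i \<noteq> j" "X i = X j"
    unfolding inj_on_def by auto
  define v where "v k = (if k = i then 1 else if k = j then -1 else (0::real))" for k
  have "(\<Sum>k<n. v k *\<^sub>R X k) = (\<Sum>k\<in>{i,j}. v k *\<^sub>R X k)"
    by (rule sum.mono_neutral_right) (use ij in \<open>auto simp: v_def\<close>)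
  also have "\<dots> = 0" using ij by (simp add: v_def)
  finally show ?thesis using ij by (intro exI[of _ v]) (auto simp: v_def)
next
  case True
  have "dependent (X ` {..<n})"
    using assms True by (intro dependent_biggerset) (simp add: card_image)
  then obtain u where u: "\<exists>x\<in>X ` {..<n}. u x \<noteq> 0" "(\<Sum>x\<in>X ` {..<n}. u x *\<^sub>R x) = 0"
    by (subst (asm) dependent_finite) auto
  have "(\<Sum>i<n. u (X i) *\<^sub>R X i) = 0"
    using u(2) by (simp add: sum.reindex[OF True])
  then show ?thesis using u(1) by (intro exI[of _ "\<lambda>i. u (X i)"]) auto
qed

lemma F_stat_lower_bound:
  fixes X :: "nat \<Rightarrow> real^'p"
  assumes "full_col_rank n X" "real CARD('p) + 1 \<le> real n"
    and "0 < resid_quad n X y" "resid_quad n X y \<le> R"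
    and "k * (\<Sum>i<n. (X i \<bullet> c)\<^sup>2) \<le> (\<Sum>i<n. y i * (X i \<bullet> c))\<^sup>2"
    and "0 < (\<Sum>i<n. (X i \<bullet> c)\<^sup>2)"
  shows "(real n - real CARD('p) - 1) / real CARD('p) * (k / R) \<le> F_stat n X y"
proof -
  have "k * (\<Sum>i<n. (X i \<bullet> c)\<^sup>2) \<le> proj_quad n X y * (\<Sum>i<n. (X i \<bullet> c)\<^sup>2)"
    using assms(5) proj_quad_Cauchy_Schwarz[OF assms(1), of y c] by (rule order.trans)
  then have proj: "k \<le> proj_quad n X y"
    using assms(6) by (simp add: mult_le_cancel_right)
  have "k / R \<le> proj_quad n X y / R"
    using proj assms(3,4) by (intro divide_right_mono) auto
  also have "\<dots> \<le> proj_quad n X y / resid_quad n X y"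
    using proj_quad_eq_sum_fitted_sq[OF assms(1)] assms(3,4)
    by (intro divide_left_mono) (auto simp: sum_nonneg)
  finally show ?thesis
    unfolding F_stat_def using assms(2) by (intro mult_left_mono) auto
qed

section \<open>The \<open>F\<close> distribution\<close>

lemma Beta_real_pos: "0 < a \<Longrightarrow> 0 < b \<Longrightarrow> 0 < (Beta a b :: real)"
  by (simp add: Beta_def Gamma_real_pos)

lemma Beta_shift:
  fixes a b :: real
  assumes "a > 0" "b > 1"
  shows "Beta (a + 1) (b - 1) = a / (b - 1) * Beta a b"
proof -
  define S where "S = a + (b - 1)"
  have S: "S > 0" using assms by (simp add: S_def)
  have "S * Beta (a + 1) (b - 1) = a * Beta a (b - 1)"
    unfolding S_def using assms by (intro Beta_plus1_left) (auto elim: nonpos_Ints_cases)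
  then have 1: "Beta (a + 1) (b - 1) = a * Beta a (b - 1) / S"
    using S by (simp add: field_simps)
  have "S * Beta a (b - 1 + 1) = (b - 1) * Beta a (b - 1)"
    unfolding S_def using assms by (intro Beta_plus1_right) (auto elim: nonpos_Ints_cases)
  then have 2: "Beta a (b - 1) = S * Beta a b / (b - 1)"
    using assms by (simp add: field_simps)
  show ?thesis
    using S unfolding 1 2 by simp
qed

lemma set_integral_Beta_kernel:
  fixes a b :: real
  assumes "a > 0" "b > 0"
  shows "(LINT t:{0..1}|lborel. t powr (a - 1) * (1 - t) powr (b - 1)) = Beta a b"
  using set_borel_integral_eq_integral(2)[OF integrable_Beta[OF assms]]
    integral_unique[OF has_integral_Beta_real[OF assms]] by simp

lemma set_integral_split_at:
  fixes f :: "real \<Rightarrow> real"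
  assumes "set_integrable lborel {a..b} f" "a \<le> c" "c \<le> b"
  shows "(LINT t:{a..b}|lborel. f t) = (LINT t:{a..c}|lborel. f t) + (LINT t:{c<..b}|lborel. f t)"
proof -
  have "{a..b} = {a..c} \<union> {c<..b}" using assms(2,3) by auto
  moreover have "set_integrable lborel {a..c} f" "set_integrable lborel {c<..b} f"
    using assms by (auto intro: set_integrable_subset)
  ultimately show ?thesis by (simp add: set_integral_Un ivl_disj_int_two(8))
qed

lemma Beta_kernel_le_shifted:
  fixes a b T t :: real
  assumes b: "b > 1" and T: "0 < T" "T < t" "t \<le> 1"
  shows "t powr (a - 1) * (1 - t) powr (b - 1)
    \<le> (1 - T) / T * (t powr (a + 1 - 1) * (1 - t) powr (b - 1 - 1))"
proof (cases "t = 1")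
  case True
  then show ?thesis using b by simp
next
  case False
  with T have t: "0 < t" "t < 1" by auto
  have "t powr (a - 1) * (1 - t) powr (b - 1) * 1
      \<le> t powr (a - 1) * (1 - t) powr (b - 1) * ((1 - T) / T * (t / (1 - t)))"
    using T t by (intro mult_left_mono) (simp_all add: field_simps)
  also have "\<dots> = (1 - T) / T * (t powr (a + 1 - 1) * (1 - t) powr (b - 1 - 1))"
    using t by (simp add: powr_add[symmetric] powr_diff power2_eq_square mult_ac)
  finally show ?thesis by simp
qed

text \<open>Markov's inequality for the Beta kernel, with weight \<open>t / (1 - t)\<close>, which
  raises the first parameter and lowers the second.\<close>

lemma Beta_kernel_upper_tail_le:
  fixes a b T :: real
  assumes a: "a > 0" and b: "b > 1" and T: "0 < T" "T < 1"
  shows "(LINT t:{T<..1}|lborel. t powr (a - 1) * (1 - t) powr (b - 1))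
    \<le> (1 - T) / T * (a / (b - 1)) * Beta a b"
proof -
  define h where "h t = t powr (a - 1) * (1 - t) powr (b - 1)" for t :: real
  define h' where "h' t = t powr (a + 1 - 1) * (1 - t) powr (b - 1 - 1)" for t :: real
  have int_h: "set_integrable lborel {T<..1} h"
    using integrable_Beta[OF a, of b] b T unfolding h_def
    by (auto intro: set_integrable_subset)
  have int_h': "set_integrable lborel {0..1} h'"
    using integrable_Beta[of "a + 1" "b - 1"] a b unfolding h'_def by simp
  have tail_h': "(LINT t:{T<..1}|lborel. h' t) \<le> a / (b - 1) * Beta a b"
  proof -
    have "0 \<le> (LINT t:{0..T}|lborel. h' t)"
      unfolding set_lebesgue_integral_def
      by (rule Bochner_Integration.integral_nonneg) (simp add: h'_def indicator_def)
    moreover have "(LINT t:{0..1}|lborel. h' t) = a / (b - 1) * Beta a b"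
      using set_integral_Beta_kernel[of "a + 1" "b - 1"] a b Beta_shift[OF a b]
      by (simp add: h'_def)
    ultimately show ?thesis
      using set_integral_split_at[OF int_h', of T] T by simp
  qed
  have "h t \<le> (1 - T) / T * h' t" if "t \<in> {T<..1}" for t
    using Beta_kernel_le_shifted[OF b T(1), of t a] that by (simp add: h_def h'_def)
  then have "(LINT t:{T<..1}|lborel. h t) \<le> (LINT t:{T<..1}|lborel. (1 - T) / T * h' t)"
    using int_h int_h' T by (intro set_integral_mono) (auto intro: set_integrable_mult_right
        set_integrable_subset)
  also have "\<dots> = (1 - T) / T * (LINT t:{T<..1}|lborel. h' t)"
    by (rule set_integral_mult_right)
  also have "\<dots> \<le> (1 - T) / T * (a / (b - 1) * Beta a b)"
    using tail_h' T by (intro mult_left_mono) auto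
  finally show ?thesis
    by (simp add: h_def mult.assoc)
qed

lemma F_density_substitution:
  fixes a b t :: real
  assumes a: "a > 0" and b: "b > 0" and t: "0 \<le> t" "t < 1"
  shows "F_density a b (b / a * t / (1 - t)) * (b / a / (1 - t)\<^sup>2)
       = t powr (a/2 - 1) * (1 - t) powr (b/2 - 1) / Beta (a/2) (b/2)"
proof (cases "t = 0")
  case True
  then show ?thesis by (simp add: F_density_def)
next
  case False
  then have t0: "t > 0" using t by simp
  have t1: "1 - t > 0" using t by simp
  have pos: "b / a * t / (1 - t) > 0" using a b t0 t1 by simp
  have e1: "1 + a * (b / a * t / (1 - t)) / b = 1 / (1 - t)"
    using a b t1 by (simp add: field_simps)
  have f1: "(a / b) powr (a / 2) = exp (a/2 * (ln a - ln b))"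
    using a b by (simp add: powr_def ln_div)
  have f2: "(b / a * t / (1 - t)) powr (a / 2 - 1)
      = exp ((a/2 - 1) * (ln b - ln a + ln t - ln (1 - t)))"
    using a b t0 t1 by (simp add: powr_def ln_div ln_mult)
  have f3: "(1 / (1 - t)) powr (- (a + b) / 2) = exp ((a + b) / 2 * ln (1 - t))"
    using t1 by (simp add: powr_def ln_div algebra_simps)
  have f4: "b / a / (1 - t)\<^sup>2 = exp (ln b - ln a - 2 * ln (1 - t))"
    using a b t1 by (simp add: exp_diff exp_double)
  have f5: "t powr (a/2 - 1) * (1 - t) powr (b/2 - 1)
      = exp ((a/2 - 1) * ln t + (b/2 - 1) * ln (1 - t))"
    using t0 t1 by (simp add: powr_def exp_add)
  have "a/2 * (ln a - ln b) + (a/2 - 1) * (ln b - ln a + ln t - ln (1 - t))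
      + (a + b) / 2 * ln (1 - t) + (ln b - ln a - 2 * ln (1 - t))
      = (a/2 - 1) * ln t + (b/2 - 1) * ln (1 - t)"
    by (simp add: field_simps)
  then have kernel: "(a / b) powr (a / 2) * (b / a * t / (1 - t)) powr (a / 2 - 1)
      * (1 / (1 - t)) powr (- (a + b) / 2) * (b / a / (1 - t)\<^sup>2)
      = t powr (a/2 - 1) * (1 - t) powr (b/2 - 1)"
    unfolding f1 f2 f3 f4 f5 by (simp add: exp_add[symmetric])
  have "F_density a b (b / a * t / (1 - t)) * (b / a / (1 - t)\<^sup>2)
      = (a / b) powr (a / 2) * (b / a * t / (1 - t)) powr (a / 2 - 1)
        * (1 / (1 - t)) powr (- (a + b) / 2) / Beta (a / 2) (b / 2) * (b / a / (1 - t)\<^sup>2)"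
    by (simp only: F_density_def if_P[OF pos] e1)
  also have "\<dots> = t powr (a/2 - 1) * (1 - t) powr (b/2 - 1) / Beta (a/2) (b/2)"
    by (subst kernel[symmetric]) (rule times_divide_eq_left)
  finally show ?thesis .
qed

lemma F_density_measurable [measurable]: "F_density a b \<in> borel_measurable borel"
  unfolding F_density_def by measurable

lemma F_density_nonneg: "a > 0 \<Longrightarrow> b > 0 \<Longrightarrow> F_density a b x \<ge> 0"
  using Beta_real_pos[of "a/2" "b/2"] by (simp add: F_density_def)

lemma F_Beta_change_point:
  fixes a b Q :: real
  assumes a: "a > 0" and b: "b > 0" and Q: "Q > 0"
  defines "T \<equiv> a * Q / (b + a * Q)"
  shows "0 < T" "T < 1" "b / a * T / (1 - T) = Q" "(1 - T) / T = b / (a * Q)"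
proof -
  have aQ: "0 < a * Q" and den: "0 < b + a * Q"
    using a b Q by (simp_all add: add_pos_pos)
  show T: "0 < T" "T < 1"
    using aQ den b by (simp_all add: T_def divide_less_eq)
  have Tb: "T * b = a * Q * (1 - T)"
    using den by (simp add: T_def field_simps)
  then show "b / a * T / (1 - T) = Q"
    using a b T by (simp add: field_simps)
  have "(1 - T) / T = a * Q * (1 - T) / (a * Q * T)"
    using a Q by simp
  also have "\<dots> = b / (a * Q)"
    using T by (simp flip: Tb)
  finally show "(1 - T) / T = b / (a * Q)" .
qed

lemma F_cdf_eq_incomplete_Beta:
  fixes a b Q :: real
  assumes a: "a > 0" and b: "b > 0" and Q: "Q > 0"
  defines "T \<equiv> a * Q / (b + a * Q)"
  shows "F_cdf a b Q
    = (LINT t:{0..T}|lborel. t powr (a/2 - 1) * (1 - t) powr (b/2 - 1) / Beta (a/2) (b/2))"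
proof -
  define g where "g t = b / a * t / (1 - t)" for t :: real
  define g' where "g' t = b / a / (1 - t)\<^sup>2" for t :: real
  have T0: "0 < T" and T1: "T < 1" and gT: "g T = Q"
    using F_Beta_change_point[OF a b Q] by (simp_all add: T_def g_def)
  have g0: "g 0 = 0"
    by (simp add: g_def)
  have "F_cdf a b Q = enn2real (\<integral>\<^sup>+ x. ennreal (indicator {..Q} x * F_density a b x) \<partial>lborel)"
    unfolding F_cdf_def set_lebesgue_integral_def
    by (subst integral_eq_nn_integral) (auto simp: F_density_nonneg a b)
  also have "(\<integral>\<^sup>+ x. ennreal (indicator {..Q} x * F_density a b x) \<partial>lborel)
      = (\<integral>\<^sup>+ x. ennreal (F_density a b x * indicator {g 0..g T} x) \<partial>lborel)"
    unfolding g0 gT by (intro nn_integral_cong) (auto simp: indicator_def F_density_def)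
  also have "\<dots> = (\<integral>\<^sup>+ x. ennreal (F_density a b (g x) * g' x * indicator {0..T} x) \<partial>lborel)"
  proof (rule nn_integral_substitution)
    show "set_borel_measurable borel {g 0..g T} (F_density a b)"
      unfolding set_borel_measurable_def by measurable
    show "(g has_real_derivative g' x) (at x)" if "x \<in> {0..T}" for x
    proof -
      have "1 - x \<noteq> 0" using that T1 by auto
      then show ?thesis unfolding g_def g'_def using a
        by (auto intro!: derivative_eq_intros simp: power2_eq_square divide_simps)
          (simp add: algebra_simps)
    qed
    show "continuous_on {0..T} g'"
      unfolding g'_def using T1 by (intro continuous_intros) auto
    show "0 \<le> g' x" for x using a b by (simp add: g'_def)
  qed (use T0 in simp)
  also have "\<dots> = (\<integral>\<^sup>+ x. ennreal (indicator {0..T} x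
      * (x powr (a/2 - 1) * (1 - x) powr (b/2 - 1) / Beta (a/2) (b/2))) \<partial>lborel)"
    using T1 F_density_substitution[OF a b]
    by (intro nn_integral_cong) (simp add: g_def g'_def indicator_def)
  also have "enn2real \<dots>
      = (LINT x:{0..T}|lborel. x powr (a/2 - 1) * (1 - x) powr (b/2 - 1) / Beta (a/2) (b/2))"
    unfolding set_lebesgue_integral_def
    by (subst integral_eq_nn_integral)
      (auto intro!: divide_nonneg_nonneg less_imp_le[OF Beta_real_pos] simp: a b)
  finally show ?thesis .
qed

text \<open>Markov's inequality for the \<open>F\<close> distribution, whose mean is \<open>b / (b - 2)\<close>.\<close>

lemma F_cdf_ge:
  fixes a b Q :: real
  assumes a: "a > 0" and b: "b > 2" and Q: "Q > 0"
  shows "1 - b / ((b - 2) * Q) \<le> F_cdf a b Q"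
proof -
  define T where "T = a * Q / (b + a * Q)"
  define B where "B = Beta (a/2) (b/2)"
  define h where "h t = t powr (a/2 - 1) * (1 - t) powr (b/2 - 1)" for t :: real
  have T: "0 < T" "T < 1" and odds: "(1 - T) / T = b / (a * Q)"
    using F_Beta_change_point[of a b Q] a b Q by (simp_all add: T_def)
  have B: "B > 0" using a b by (simp add: B_def Beta_real_pos)
  have "B = (LINT t:{0..1}|lborel. h t)"
    using set_integral_Beta_kernel[of "a/2" "b/2"] a b by (simp add: h_def B_def)
  also have "\<dots> = (LINT t:{0..T}|lborel. h t) + (LINT t:{T<..1}|lborel. h t)"
    using integrable_Beta[of "a/2" "b/2"] a b T
    by (intro set_integral_split_at) (simp_all add: h_def)
  finally have split: "B = (LINT t:{0..T}|lborel. h t) + (LINT t:{T<..1}|lborel. h t)" .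
  have tail: "(LINT t:{T<..1}|lborel. h t) \<le> b / ((b - 2) * Q) * B"
  proof -
    have "(1 - T) / T * (a / 2 / (b / 2 - 1)) = b / ((b - 2) * Q)"
      unfolding odds using a b Q by (simp add: field_simps)
    then show ?thesis
      using Beta_kernel_upper_tail_le[of "a/2" "b/2" T] a b T by (simp add: h_def B_def)
  qed
  have "F_cdf a b Q = (LINT t:{0..T}|lborel. h t) / B"
    using F_cdf_eq_incomplete_Beta[OF a _ Q] b
    by (simp add: T_def h_def B_def set_integral_divide_zero)
  also have "\<dots> = 1 - (LINT t:{T<..1}|lborel. h t) / B"
    using B by (simp add: split field_simps)
  finally show ?thesis
    using tail B by (simp add: pos_divide_le_eq)
qed

lemma F_quantile_le:
  fixes a b \<alpha> :: real
  assumes a: "a > 0" and b: "b \<ge> 4" and \<alpha>: "0 < \<alpha>" "\<alpha> < 1"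
  shows "F_quantile a b (1 - \<alpha>) \<le> 2 / \<alpha>"
  unfolding F_quantile_def
proof (rule cInf_lower)
  have "1 - \<alpha> \<le> 1 - b / ((b - 2) * (2 / \<alpha>))"
    using b \<alpha> by (simp add: field_simps)
  also have "\<dots> \<le> F_cdf a b (2 / \<alpha>)"
    using a b \<alpha> by (intro F_cdf_ge) auto
  finally show "2 / \<alpha> \<in> {x. 1 - \<alpha> \<le> F_cdf a b x}" by simp
  have "F_cdf a b x = 0" if "x < 0" for x
    unfolding F_cdf_def set_lebesgue_integral_def using that
    by (subst Bochner_Integration.integral_cong[of _ _ _ "\<lambda>_. 0"])
      (auto simp: indicator_def F_density_def)
  then show "bdd_below {x. 1 - \<alpha> \<le> F_cdf a b x}"
    using \<alpha> by (intro bdd_belowI[of _ 0]) (metis linorder_not_le mem_Collect_eq diff_gt_0_iff_gt)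
qed

section \<open>Independent normal vectors\<close>

definition normal_PiM :: "nat \<Rightarrow> (nat \<Rightarrow> real) \<Rightarrow> real \<Rightarrow> (nat \<Rightarrow> real) measure" where
  "normal_PiM n \<mu> \<sigma> = PiM {..<n} (\<lambda>i. density lborel (normal_density (\<mu> i) \<sigma>))"

lemma Ydist_eq_normal_PiM: "Ydist n X \<beta> \<sigma>2 = normal_PiM n (\<lambda>i. X i \<bullet> \<beta>) (sqrt \<sigma>2)"
  by (simp add: Ydist_def normal_PiM_def)

lemma prob_space_normal_PiM: "\<sigma> > 0 \<Longrightarrow> prob_space (normal_PiM n \<mu> \<sigma>)"
  unfolding normal_PiM_def by (intro prob_space_PiM prob_space_normal_density)

lemma sets_normal_PiM: "sets (normal_PiM n \<mu> \<sigma>) = sets (PiM {..<n} (\<lambda>_. borel))"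
  unfolding normal_PiM_def by (rule sets_PiM_cong) simp_all

lemma measurable_normal_PiM:
  "measurable (normal_PiM n \<mu> \<sigma>) N = measurable (PiM {..<n} (\<lambda>_. borel)) N"
  by (rule measurable_cong_sets[OF sets_normal_PiM refl])

lemma normal_PiM_component_measurable:
  "i < n \<Longrightarrow> (\<lambda>y. y i) \<in> borel_measurable (normal_PiM n \<mu> \<sigma>)"
  unfolding measurable_normal_PiM by measurable

lemma normal_PiM_lincomb_measurable [measurable]:
  "(\<lambda>y. \<Sum>i<n. a i * y i) \<in> borel_measurable (normal_PiM n \<mu> \<sigma>)"
  unfolding measurable_normal_PiM by measurable

lemma normal_PiM_sum_sq_measurable [measurable]:
  "(\<lambda>y. \<Sum>i<n. (y i - m i)\<^sup>2) \<in> borel_measurable (normal_PiM n \<mu> \<sigma>)"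
  unfolding measurable_normal_PiM by measurable

lemma distributed_normal_PiM_component:
  assumes "\<sigma> > 0" "i < n"
  shows "distributed (normal_PiM n \<mu> \<sigma>) lborel (\<lambda>y. y i) (normal_density (\<mu> i) \<sigma>)"
  unfolding distributed_def
proof (intro conjI)
  have "distr (normal_PiM n \<mu> \<sigma>) lborel (\<lambda>y. y i)
      = distr (normal_PiM n \<mu> \<sigma>) (density lborel (normal_density (\<mu> i) \<sigma>)) (\<lambda>y. y i)"
    by (rule distr_cong) simp_all
  also have "\<dots> = density lborel (normal_density (\<mu> i) \<sigma>)"
    unfolding normal_PiM_def using assms
    by (subst distr_PiM_component) (simp_all add: prob_space_normal_density)
  finally show "distr (normal_PiM n \<mu> \<sigma>) lborel (\<lambda>y. y i) = density lborel (normal_density (\<mu> i) \<sigma>)" .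
qed (use normal_PiM_component_measurable[OF assms(2)] in simp_all)

lemma indep_vars_normal_PiM_components:
  assumes "\<sigma> > 0" "n > 0"
  shows "prob_space.indep_vars (normal_PiM n \<mu> \<sigma>) (\<lambda>_. borel) (\<lambda>i y. y i) {..<n}"
proof -
  let ?M = "normal_PiM n \<mu> \<sigma>"
  interpret prob_space ?M by (rule prob_space_normal_PiM[OF assms(1)])
  have "distr ?M (PiM {..<n} (\<lambda>_. borel)) (\<lambda>x. \<lambda>i\<in>{..<n}. x i)
      = distr ?M (PiM {..<n} (\<lambda>_. borel)) (\<lambda>x. x)"
    by (rule distr_cong)
      (auto simp: sets_eq_imp_space_eq[OF sets_normal_PiM] space_PiM PiE_def extensional_def)
  also have "\<dots> = ?M" by (rule distr_id2[OF sets_normal_PiM[symmetric]])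
  also have "\<dots> = PiM {..<n} (\<lambda>i. density lborel (normal_density (\<mu> i) \<sigma>))"
    by (rule normal_PiM_def)
  also have "\<dots> = PiM {..<n} (\<lambda>i. distr ?M borel (\<lambda>x. x i))"
  proof (rule PiM_cong)
    fix i assume "i \<in> {..<n}"
    then have "distr ?M lborel (\<lambda>x. x i) = density lborel (normal_density (\<mu> i) \<sigma>)"
      using distributed_normal_PiM_component[OF assms(1)] by (simp add: distributed_def)
    then show "density lborel (normal_density (\<mu> i) \<sigma>) = distr ?M borel (\<lambda>x. x i)"
      by (metis distr_cong sets_lborel)
  qed simp
  finally show ?thesis
    using assms(2) by (subst indep_vars_iff_distr_eq_PiM') (auto intro: normal_PiM_component_measurable)
qed

lemma distributed_normal_PiM_lincomb:
  assumes \<sigma>: "\<sigma> > 0" and i0: "i0 < n" "a i0 \<noteq> 0"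
  shows "distributed (normal_PiM n \<mu> \<sigma>) lborel (\<lambda>y. \<Sum>i<n. a i * y i)
           (normal_density (\<Sum>i<n. a i * \<mu> i) (\<sigma> * sqrt (\<Sum>i<n. (a i)\<^sup>2)))"
proof -
  interpret prob_space "normal_PiM n \<mu> \<sigma>" by (rule prob_space_normal_PiM[OF \<sigma>])
  \<comment> \<open>Summands with \<open>a i = 0\<close> are degenerate, not normal, so they are dropped.\<close>
  define I where "I = {i\<in>{..<n}. a i \<noteq> 0}"
  have I: "finite I" "I \<noteq> {}" "I \<subseteq> {..<n}" using i0 by (auto simp: I_def)
  have "indep_vars (\<lambda>_. borel) (\<lambda>i y. y i) I"
    using indep_vars_subset[OF indep_vars_normal_PiM_components[OF \<sigma>, of n \<mu>] I(3)] i0 by simp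
  then have indep: "indep_vars (\<lambda>_. borel) (\<lambda>i y. a i * y i) I"
    using indep_vars_compose2[of _ _ I "\<lambda>i x. a i * x" "\<lambda>_. borel"] by simp
  have "distributed (normal_PiM n \<mu> \<sigma>) lborel (\<lambda>y. a i * y i) (normal_density (a i * \<mu> i) (\<bar>a i\<bar> * \<sigma>))"
    if "i \<in> I" for i
  proof -
    have "distributed (normal_PiM n \<mu> \<sigma>) lborel (\<lambda>y. y i) (normal_density (\<mu> i) \<sigma>)"
      using that by (intro distributed_normal_PiM_component[OF \<sigma>]) (simp add: I_def)
    from normal_density_affine[OF this \<sigma>, of "a i" 0] show ?thesis
      using that by (simp add: I_def)
  qed
  then have "distributed (normal_PiM n \<mu> \<sigma>) lborel (\<lambda>y. \<Sum>i\<in>I. a i * y i)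
      (normal_density (\<Sum>i\<in>I. a i * \<mu> i) (sqrt (\<Sum>i\<in>I. (\<bar>a i\<bar> * \<sigma>)\<^sup>2)))"
    using \<sigma> by (intro sum_indep_normal[OF I(1,2) indep]) (auto simp: I_def)
  moreover have "(\<Sum>i\<in>I. f i) = (\<Sum>i<n. f i)" if "\<And>i. a i = 0 \<Longrightarrow> f i = 0" for f :: "nat \<Rightarrow> real"
    using that by (intro sum.mono_neutral_left) (auto simp: I_def)
  moreover have "sqrt (\<Sum>i<n. \<sigma>\<^sup>2 * (a i)\<^sup>2) = \<sigma> * sqrt (\<Sum>i<n. (a i)\<^sup>2)"
    using \<sigma> by (simp add: real_sqrt_mult flip: sum_distrib_left)
  ultimately show ?thesis
    by (simp add: power_mult_distrib mult.commute)
qed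

lemma normal_exp_quarter_moment:
  assumes \<sigma>: "\<sigma> > 0"
  shows "(\<integral>\<^sup>+ x. ennreal (exp ((x - m)\<^sup>2 / (4 * \<sigma>\<^sup>2))) \<partial>density lborel (normal_density m \<sigma>))
    = ennreal (sqrt 2)"
proof -
  have pointwise: "normal_density m \<sigma> x * exp ((x - m)\<^sup>2 / (4 * \<sigma>\<^sup>2))
      = sqrt 2 * normal_density m (sqrt 2 * \<sigma>) x" for x
  proof -
    have "exp (- (x - m)\<^sup>2 / (2 * \<sigma>\<^sup>2)) * exp ((x - m)\<^sup>2 / (4 * \<sigma>\<^sup>2))
        = exp (- (x - m)\<^sup>2 / (2 * (sqrt 2 * \<sigma>)\<^sup>2))"
      using \<sigma> by (simp add: exp_add[symmetric] power_mult_distrib field_simps)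
    moreover have "sqrt (2 * pi * (sqrt 2 * \<sigma>)\<^sup>2) = sqrt 2 * sqrt (2 * pi * \<sigma>\<^sup>2)"
      by (simp add: power_mult_distrib real_sqrt_mult[symmetric] mult_ac)
    ultimately show ?thesis
      unfolding normal_density_def by (simp add: field_simps)
  qed
  have "(\<integral>\<^sup>+ x. ennreal (exp ((x - m)\<^sup>2 / (4 * \<sigma>\<^sup>2))) \<partial>density lborel (normal_density m \<sigma>))
      = (\<integral>\<^sup>+ x. ennreal (sqrt 2) * ennreal (normal_density m (sqrt 2 * \<sigma>) x) \<partial>lborel)"
    by (subst nn_integral_density)
      (auto intro!: nn_integral_cong simp: ennreal_mult'[symmetric] pointwise)
  also have "\<dots> = ennreal (sqrt 2) * (\<integral>\<^sup>+ x. ennreal (normal_density m (sqrt 2 * \<sigma>) x) \<partial>lborel)"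
    by (rule nn_integral_cmult) simp
  also have "(\<integral>\<^sup>+ x. ennreal (normal_density m (sqrt 2 * \<sigma>) x) \<partial>lborel) = 1"
    using \<sigma> by (subst nn_integral_eq_integral)
      (auto intro: integrable_normal_density integral_normal_density)
  finally show ?thesis by simp
qed

lemma normal_PiM_exp_moment:
  assumes \<sigma>: "\<sigma> > 0"
  shows "(\<integral>\<^sup>+ y. ennreal (exp ((\<Sum>i<n. (y i - \<mu> i)\<^sup>2) / (4 * \<sigma>\<^sup>2))) \<partial>normal_PiM n \<mu> \<sigma>)
    = ennreal (sqrt 2 ^ n)"
proof -
  let ?N = "\<lambda>i. density lborel (normal_density (\<mu> i) \<sigma>)"
  interpret product_prob_space ?N
    by (rule product_prob_spaceI) (rule prob_space_normal_density[OF \<sigma>])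
  have "(\<integral>\<^sup>+ y. ennreal (exp ((\<Sum>i<n. (y i - \<mu> i)\<^sup>2) / (4 * \<sigma>\<^sup>2))) \<partial>normal_PiM n \<mu> \<sigma>)
      = (\<integral>\<^sup>+ y. (\<Prod>i\<in>{..<n}. ennreal (exp ((y i - \<mu> i)\<^sup>2 / (4 * \<sigma>\<^sup>2)))) \<partial>PiM {..<n} ?N)"
    unfolding normal_PiM_def
    by (intro nn_integral_cong) (simp add: exp_sum prod_ennreal sum_divide_distrib)
  also have "\<dots> = (\<Prod>i\<in>{..<n}. \<integral>\<^sup>+ x. ennreal (exp ((x - \<mu> i)\<^sup>2 / (4 * \<sigma>\<^sup>2))) \<partial>?N i)"
    by (rule product_nn_integral_prod) auto
  also have "\<dots> = ennreal (sqrt 2 ^ n)"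
    by (simp add: normal_exp_quarter_moment[OF \<sigma>] prod_ennreal ennreal_power)
  finally show ?thesis .
qed

text \<open>Chernoff bound with exponent \<open>1 / (4 \<sigma>\<^sup>2)\<close>: by the previous lemma each coordinate
  contributes a factor \<open>sqrt 2\<close>, and the threshold contributes \<open>exp (- n / 2)\<close>.\<close>

lemma normal_PiM_sum_sq_tail:
  assumes \<sigma>: "\<sigma> > 0"
  shows "measure (normal_PiM n \<mu> \<sigma>)
      {y \<in> space (normal_PiM n \<mu> \<sigma>). 2 * real n * \<sigma>\<^sup>2 < (\<Sum>i<n. (y i - \<mu> i)\<^sup>2)}
    \<le> (sqrt 2 / exp (1/2))^n"
proof -
  let ?M = "normal_PiM n \<mu> \<sigma>"
  interpret prob_space ?M by (rule prob_space_normal_PiM[OF \<sigma>])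
  define F where "F y = (\<Sum>i<n. (y i - \<mu> i)\<^sup>2)" for y
  define u where "u y = ennreal (exp (F y / (4 * \<sigma>\<^sup>2)))" for y
  define c where "c = exp (- real n / 2)"
  have [measurable]: "F \<in> borel_measurable ?M"
    unfolding F_def by (rule normal_PiM_sum_sq_measurable)
  have "{y \<in> space ?M. 2 * real n * \<sigma>\<^sup>2 < F y} \<subseteq> {y \<in> space ?M. 1 \<le> ennreal c * u y}"
  proof safe
    fix y assume "2 * real n * \<sigma>\<^sup>2 < F y"
    then have "exp (real n / 2) \<le> exp (F y / (4 * \<sigma>\<^sup>2))" using \<sigma> by (simp add: field_simps)
    then show "1 \<le> ennreal c * u y"
      by (simp add: u_def c_def exp_minus field_simps flip: ennreal_mult')
  qed
  then have "emeasure ?M {y \<in> space ?M. 2 * real n * \<sigma>\<^sup>2 < F y}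
      \<le> emeasure ?M {y \<in> space ?M. 1 \<le> ennreal c * u y}"
    by (rule emeasure_mono) (simp add: u_def)
  also have "\<dots> \<le> ennreal c * (\<integral>\<^sup>+ y. u y * indicator (space ?M) y \<partial>?M)"
    by (rule nn_integral_Markov_inequality) (auto simp: u_def)
  also have "(\<integral>\<^sup>+ y. u y * indicator (space ?M) y \<partial>?M) = (\<integral>\<^sup>+ y. u y \<partial>?M)"
    by (intro nn_integral_cong) simp
  also have "\<dots> = ennreal (sqrt 2 ^ n)"
    unfolding u_def F_def by (rule normal_PiM_exp_moment[OF \<sigma>])
  finally have "measure ?M {y \<in> space ?M. 2 * real n * \<sigma>\<^sup>2 < F y} \<le> c * sqrt 2 ^ n"
    by (simp add: emeasure_eq_measure c_def flip: ennreal_mult')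
  moreover have "c * sqrt 2 ^ n = (sqrt 2 / exp (1/2))^n"
    by (simp add: c_def power_divide exp_minus field_simps flip: exp_of_nat_mult)
  ultimately show ?thesis by (simp add: F_def)
qed

lemma (in prob_space) normal_upper_tail_ge:
  assumes D: "distributed M lborel Z (normal_density m \<tau>)" and \<tau>: "\<tau> > 0" and m: "m \<ge> 0"
  shows "measure (density lborel std_normal_density) {t..} \<le> measure M {x\<in>space M. \<tau> * t \<le> Z x}"
proof -
  define W where "W x = (Z x - m) / \<tau>" for x
  have DW: "distributed M lborel W std_normal_density"
    using D normal_standard_normal_convert[OF \<tau>, of Z m] by (simp add: W_def[abs_def])
  have [measurable]: "Z \<in> borel_measurable M"
    using distributed_measurable[OF D] by simp
  have "measure (density lborel std_normal_density) {t..} = measure (distr M lborel W) {t..}"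
    using DW by (simp add: distributed_def)
  also have "\<dots> = measure M (W -` {t..} \<inter> space M)"
    by (rule measure_distr[OF distributed_measurable[OF DW]]) simp
  also have "\<dots> \<le> measure M {x\<in>space M. \<tau> * t \<le> Z x}"
  proof (rule finite_measure_mono)
    show "W -` {t..} \<inter> space M \<subseteq> {x\<in>space M. \<tau> * t \<le> Z x}"
      using \<tau> m by (auto simp: W_def field_simps)
  qed measurable
  finally show ?thesis .
qed

lemma (in prob_space) normal_abs_tail_ge:
  assumes D: "distributed M lborel Z (normal_density m \<tau>)" and \<tau>: "\<tau> > 0"
  shows "measure (density lborel std_normal_density) {t..} \<le> measure M {x\<in>space M. \<tau> * t \<le> \<bar>Z x\<bar>}"
proof -
  have [measurable]: "Z \<in> borel_measurable M"
    using distributed_measurable[OF D] by simp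
  obtain s :: real where s: "s = 1 \<or> s = -1" "s * m \<ge> 0"
    by (metis mult_minus_left mult_1 neg_0_le_iff_le linear)
  have "distributed M lborel (\<lambda>x. 0 + s * Z x) (normal_density (0 + s * m) (\<bar>s\<bar> * \<tau>))"
    using s(1) by (intro normal_density_affine[OF D \<tau>]) auto
  then have "measure (density lborel std_normal_density) {t..} \<le> measure M {x\<in>space M. \<tau> * t \<le> s * Z x}"
    using s \<tau> normal_upper_tail_ge[of "\<lambda>x. s * Z x" "s * m" \<tau> t] by auto
  also have "\<dots> \<le> measure M {x\<in>space M. \<tau> * t \<le> \<bar>Z x\<bar>}"
    using s(1) by (intro finite_measure_mono) auto
  finally show ?thesis .
qed

lemma std_normal_tail_pos: "measure (density lborel std_normal_density) {t..} > 0"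
proof -
  interpret N: prob_space "density lborel std_normal_density"
    using prob_space_normal_density[of 1 0] by simp
  have pos: "std_normal_density x \<noteq> 0" for x
    using normal_density_pos[of 1 0 x] by simp
  have "emeasure (density lborel std_normal_density) {t..}
      = (\<integral>\<^sup>+ x. ennreal (std_normal_density x) * indicator {t..} x \<partial>lborel)"
    by (rule emeasure_density) auto
  also have "\<dots> \<noteq> 0"
  proof
    assume "(\<integral>\<^sup>+ x. ennreal (std_normal_density x) * indicator {t..} x \<partial>lborel) = 0"
    then have "AE x in lborel. x \<notin> {t..}"
      by (subst (asm) nn_integral_0_iff_AE)
        (auto elim!: eventually_mono simp: indicator_def pos)
    then have "emeasure lborel {t..} = 0"
      by (subst (asm) AE_iff_measurable[OF _ refl]) (auto simp: atLeast_def)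
    moreover have "emeasure lborel {t..t+1} \<le> emeasure lborel {t..}"
      by (rule emeasure_mono) auto
    ultimately show False by simp
  qed
  finally show ?thesis
    by (simp add: N.emeasure_eq_measure less_le)
qed

lemma (in prob_space) prob_normal_eq_0:
  assumes D: "distributed M lborel Z (normal_density m \<tau>)"
  shows "measure M {x\<in>space M. Z x = 0} = 0"
proof -
  have "emeasure M (Z -` {0} \<inter> space M) = (\<integral>\<^sup>+ x\<in>{0}. ennreal (normal_density m \<tau> x) \<partial>lborel)"
    by (rule distributed_emeasure[OF D]) simp
  also have "\<dots> = 0"
    by (rule nn_integral_0_iff_AE[THEN iffD2])
      (auto intro!: eventually_mono[OF AE_lborel_singleton[of 0]] simp: indicator_def)
  finally show ?thesis
    by (simp add: measure_def vimage_def Int_def conj_commute)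
qed

lemma (in finite_measure) measure_Diff_ge:
  "A \<in> sets M \<Longrightarrow> B \<in> sets M \<Longrightarrow> measure M A - measure M B \<le> measure M (A - B)"
  using finite_measure_Diff'[of A B] finite_measure_mono[of "A \<inter> B" B] by auto

lemma normal_PiM_lincomb_tail_event_ge:
  assumes \<sigma>: "\<sigma> > 0" and u: "i0 < n" "u i0 \<noteq> 0" and v: "j0 < n" "v j0 \<noteq> 0"
  shows "measure (density lborel std_normal_density) {t..} - (sqrt 2 / exp (1/2))^n
    \<le> measure (normal_PiM n \<mu> \<sigma>) {y \<in> space (normal_PiM n \<mu> \<sigma>).
        \<sigma> * sqrt (\<Sum>i<n. (u i)\<^sup>2) * t \<le> \<bar>\<Sum>i<n. u i * y i\<bar>
        \<and> (\<Sum>i<n. (y i - \<mu> i)\<^sup>2) \<le> 2 * real n * \<sigma>\<^sup>2 \<and> (\<Sum>i<n. v i * y i) \<noteq> 0}"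
proof -
  let ?M = "normal_PiM n \<mu> \<sigma>"
  interpret prob_space ?M by (rule prob_space_normal_PiM[OF \<sigma>])
  define U where "U = {y \<in> space ?M. \<sigma> * sqrt (\<Sum>i<n. (u i)\<^sup>2) * t \<le> \<bar>\<Sum>i<n. u i * y i\<bar>}"
  define C where "C = {y \<in> space ?M. 2 * real n * \<sigma>\<^sup>2 < (\<Sum>i<n. (y i - \<mu> i)\<^sup>2)}"
  define V where "V = {y \<in> space ?M. (\<Sum>i<n. v i * y i) = 0}"
  have sets: "U \<in> sets ?M" "C \<in> sets ?M" "V \<in> sets ?M"
    unfolding U_def C_def V_def by measurable
  have "measure (density lborel std_normal_density) {t..} \<le> measure ?M U"
    unfolding U_def by (rule normal_abs_tail_ge[OF distributed_normal_PiM_lincomb[where a = u, OF \<sigma> u]])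
      (use \<sigma> u sum_pos2[of "{..<n}" i0 "\<lambda>i. (u i)\<^sup>2"] in auto)
  moreover have "measure ?M C \<le> (sqrt 2 / exp (1/2))^n"
    unfolding C_def by (rule normal_PiM_sum_sq_tail[OF \<sigma>])
  moreover have "measure ?M V = 0"
    unfolding V_def by (rule prob_normal_eq_0[OF distributed_normal_PiM_lincomb[where a = v, OF \<sigma> v]])
  moreover have "measure ?M U - measure ?M C - measure ?M V \<le> measure ?M (U - C - V)"
    using measure_Diff_ge[of U C] measure_Diff_ge[of "U - C" V] sets by auto
  moreover have "U - C - V = {y \<in> space ?M. \<sigma> * sqrt (\<Sum>i<n. (u i)\<^sup>2) * t \<le> \<bar>\<Sum>i<n. u i * y i\<bar>
      \<and> (\<Sum>i<n. (y i - \<mu> i)\<^sup>2) \<le> 2 * real n * \<sigma>\<^sup>2 \<and> (\<Sum>i<n. v i * y i) \<noteq> 0}"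
    by (auto simp: U_def C_def V_def not_less)
  ultimately show ?thesis by simp
qed

section \<open>Power of the overall \<open>F\<close>-test\<close>

lemma prob_space_Ydist: "\<sigma>2 > 0 \<Longrightarrow> prob_space (Ydist n X \<beta> \<sigma>2)"
  unfolding Ydist_eq_normal_PiM by (rule prob_space_normal_PiM) simp

lemma mem_E1I:
  fixes X :: "nat \<Rightarrow> real^'p" and \<beta> c :: "real^'p"
  assumes \<sigma>2: "\<sigma>2 > 0" and \<alpha>0: "0 < \<alpha>0" "\<alpha>0 < 1"
    and full: "full_col_rank n X" and n: "3 * CARD('p) + 5 \<le> n"
    and y: "y \<in> space (Ydist n X \<beta> \<sigma>2)" and resid_pos: "0 < resid_quad n X y"
    and noise: "(\<Sum>i<n. (y i - X i \<bullet> \<beta>)\<^sup>2) \<le> 2 * real n * \<sigma>2"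
    and signal: "6 * real CARD('p) / \<alpha>0 * \<sigma>2 * (\<Sum>i<n. (X i \<bullet> c)\<^sup>2)
      \<le> (\<Sum>i<n. y i * (X i \<bullet> c))\<^sup>2"
    and c: "0 < (\<Sum>i<n. (X i \<bullet> c)\<^sup>2)"
  shows "y \<in> E1 n X \<beta> \<sigma>2 \<alpha>0"
proof -
  let ?p = "real CARD('p)"
  have nr: "3 * ?p + 5 \<le> real n"
    using n by linarith
  have "F_quantile ?p (real n - ?p - 1) (1 - \<alpha>0) \<le> 2 / \<alpha>0"
    using \<alpha>0 nr by (intro F_quantile_le) auto
  also have "\<dots> \<le> 3 * (real n - ?p - 1) / (\<alpha>0 * real n)"
    using \<alpha>0 nr by (simp add: field_simps)
  also have "\<dots> = (real n - ?p - 1) / ?p * (6 * ?p / \<alpha>0 * \<sigma>2 / (2 * real n * \<sigma>2))"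
    using \<sigma>2 \<alpha>0 nr by (simp add: field_simps)
  also have "\<dots> \<le> F_stat n X y"
    using resid_quad_le_sum_sq[OF full, of y \<beta>] noise resid_pos signal c nr
    by (intro F_stat_lower_bound[OF full]) auto
  finally show ?thesis
    using y by (simp add: E1_def)
qed

lemma F_test_power_lower_bound:
  fixes X :: "nat \<Rightarrow> real^'p" and \<beta> :: "real^'p"
  assumes \<sigma>2: "\<sigma>2 > 0" and \<alpha>0: "0 < \<alpha>0" "\<alpha>0 < 1"
    and full: "full_col_rank n X" and n: "3 * CARD('p) + 5 \<le> n"
  shows "\<exists>B\<in>sets (Ydist n X \<beta> \<sigma>2). B \<subseteq> E1 n X \<beta> \<sigma>2 \<alpha>0 \<and>
    measure (density lborel std_normal_density) {sqrt (6 * real CARD('p) / \<alpha>0)..}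
      - (sqrt 2 / exp (1/2))^n \<le> measure (Ydist n X \<beta> \<sigma>2) B"
proof -
  define \<sigma> where "\<sigma> = sqrt \<sigma>2"
  define \<mu> where "\<mu> i = X i \<bullet> \<beta>" for i
  define t where "t = sqrt (6 * real CARD('p) / \<alpha>0)"
  define u where "u i = X i \<bullet> 1" for i
  have \<sigma>: "\<sigma> > 0" and \<sigma>_sq: "\<sigma>\<^sup>2 = \<sigma>2"
    using \<sigma>2 by (simp_all add: \<sigma>_def)
  have M_eq: "Ydist n X \<beta> \<sigma>2 = normal_PiM n \<mu> \<sigma>"
    by (simp add: Ydist_eq_normal_PiM \<mu>_def[abs_def] \<sigma>_def)
  obtain i0 where i0: "i0 < n" "u i0 \<noteq> 0"
    using full unfolding full_col_rank_def u_def by (metis vec_eq_iff zero_index one_index zero_neq_one)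
  have S: "0 < (\<Sum>i<n. (u i)\<^sup>2)"
    using i0 by (intro sum_pos2[of _ i0]) auto
  obtain v where v: "\<exists>i<n. v i \<noteq> 0" "(\<Sum>i<n. v i *\<^sub>R X i) = 0"
    using exists_left_null_vector[of n X] n by auto
  then obtain j0 where j0: "j0 < n" "v j0 \<noteq> 0" by blast
  define B where "B = {y \<in> space (normal_PiM n \<mu> \<sigma>).
      \<sigma> * sqrt (\<Sum>i<n. (u i)\<^sup>2) * t \<le> \<bar>\<Sum>i<n. u i * y i\<bar>
      \<and> (\<Sum>i<n. (y i - \<mu> i)\<^sup>2) \<le> 2 * real n * \<sigma>\<^sup>2 \<and> (\<Sum>i<n. v i * y i) \<noteq> 0}"
  have "B \<in> sets (normal_PiM n \<mu> \<sigma>)"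
    unfolding B_def by measurable
  moreover have "measure (density lborel std_normal_density) {t..} - (sqrt 2 / exp (1/2))^n
      \<le> measure (normal_PiM n \<mu> \<sigma>) B"
    unfolding B_def by (rule normal_PiM_lincomb_tail_event_ge[where u = u and v = v, OF \<sigma> i0 j0])
  moreover have "B \<subseteq> E1 n X \<beta> \<sigma>2 \<alpha>0"
  proof
    fix y assume y: "y \<in> B"
    have "(\<sigma> * sqrt (\<Sum>i<n. (u i)\<^sup>2) * t)\<^sup>2 \<le> (\<Sum>i<n. u i * y i)\<^sup>2"
      using power_mono[of "\<sigma> * sqrt (\<Sum>i<n. (u i)\<^sup>2) * t" "\<bar>\<Sum>i<n. u i * y i\<bar>" 2] y \<sigma> S \<alpha>0
      by (simp add: B_def t_def)
    then have "6 * real CARD('p) / \<alpha>0 * \<sigma>2 * (\<Sum>i<n. (X i \<bullet> 1)\<^sup>2) \<le> (\<Sum>i<n. y i * (X i \<bullet> 1))\<^sup>2"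
      using \<sigma>_sq S \<alpha>0 by (simp add: t_def u_def power_mult_distrib mult_ac)
    moreover have "0 < resid_quad n X y"
      using y resid_quad_pos[OF full v(2)] by (simp add: B_def)
    ultimately show "y \<in> E1 n X \<beta> \<sigma>2 \<alpha>0"
      using y \<sigma>2 \<alpha>0 full n S \<sigma>_sq
      by (intro mem_E1I[where c = 1]) (auto simp: M_eq B_def \<mu>_def u_def)
  qed
  ultimately show ?thesis
    unfolding M_eq t_def by blast
qed

lemma sqrt_2_less_exp_half: "sqrt 2 < exp (1/2 :: real)"
proof -
  have "sqrt 2 < (3/2 :: real)"
    by (rule real_less_lsqrt) (simp_all add: power2_eq_square)
  also have "\<dots> \<le> exp (1/2)"
    using exp_ge_add_one_self[of "1/2 :: real"] by simp
  finally show ?thesis .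
qed

lemma F_test_power_eventually_ge:
  fixes X :: "nat \<Rightarrow> nat \<Rightarrow> real^'p" and \<beta> :: "real^'p"
  assumes "\<sigma>2 > 0" "0 < \<alpha>0" "\<alpha>0 < 1"
    and "\<And>n. n \<ge> CARD('p) + 2 \<Longrightarrow> full_col_rank n (X n)"
  shows "\<exists>c>0. \<forall>\<^sub>F n in sequentially. \<exists>B\<in>sets (Ydist n (X n) \<beta> \<sigma>2).
    B \<subseteq> E1 n (X n) \<beta> \<sigma>2 \<alpha>0 \<and> c \<le> measure (Ydist n (X n) \<beta> \<sigma>2) B"
proof -
  define c where "c = measure (density lborel std_normal_density) {sqrt (6 * real CARD('p) / \<alpha>0)..}"
  have c: "c > 0"
    unfolding c_def by (rule std_normal_tail_pos)
  have "(\<lambda>n. (sqrt 2 / exp (1/2 :: real))^n) \<longlonglongrightarrow> 0"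
    using sqrt_2_less_exp_half by (intro LIMSEQ_power_zero) simp
  from order_tendstoD(2)[OF this, of "c / 2"]
  have "\<forall>\<^sub>F n in sequentially. (sqrt 2 / exp (1/2))^n < c / 2"
    using c by simp
  moreover have "\<forall>\<^sub>F n in sequentially. 3 * CARD('p) + 5 \<le> n"
    by (rule eventually_ge_at_top)
  ultimately have "\<forall>\<^sub>F n in sequentially. \<exists>B\<in>sets (Ydist n (X n) \<beta> \<sigma>2).
      B \<subseteq> E1 n (X n) \<beta> \<sigma>2 \<alpha>0 \<and> c / 2 \<le> measure (Ydist n (X n) \<beta> \<sigma>2) B"
  proof eventually_elim
    case (elim n)
    have "full_col_rank n (X n)"
      using elim(2) by (intro assms(4)) simp
    then obtain B where "B \<in> sets (Ydist n (X n) \<beta> \<sigma>2)" "B \<subseteq> E1 n (X n) \<beta> \<sigma>2 \<alpha>0"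
      "c - (sqrt 2 / exp (1/2))^n \<le> measure (Ydist n (X n) \<beta> \<sigma>2) B"
      using F_test_power_lower_bound[OF assms(1-3) _ elim(2)] unfolding c_def by blast
    then show ?case
      using elim(1) by (intro bexI[of _ B]) auto
  qed
  then show ?thesis
    using c by (intro exI[of _ "c / 2"]) auto
qed

lemma cond_pr_le:
  assumes "prob_space M" "A \<in> sets M" "B \<in> sets M" "B \<subseteq> E" "0 < measure M B"
  shows "cond_pr M A E \<le> measure M A / measure M B"
proof (cases "E \<in> sets M")
  case True
  interpret prob_space M by fact
  have "measure M (A \<inter> E) / measure M E \<le> measure M A / measure M E"
    using assms(2) by (intro divide_right_mono finite_measure_mono) auto
  also have "\<dots> \<le> measure M A / measure M B"
    using assms(3-5) True finite_measure_mono[OF assms(4) True]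
    by (intro divide_left_mono) (auto intro!: mult_pos_pos)
  finally show ?thesis
    unfolding cond_pr_def .
next
  case False
  then show ?thesis
    using assms(5) by (simp add: cond_pr_def measure_notin_sets)
qed

lemma cond_pr_tendsto_0:
  assumes "\<And>n. prob_space (M n)" "\<And>n. A n \<in> sets (M n)"
    and "(\<lambda>n. measure (M n) (A n)) \<longlonglongrightarrow> 0" "c > 0"
    and "\<forall>\<^sub>F n in sequentially. \<exists>B\<in>sets (M n). B \<subseteq> E n \<and> c \<le> measure (M n) B"
  shows "(\<lambda>n. cond_pr (M n) (A n) (E n)) \<longlonglongrightarrow> 0"
proof (rule tendsto_sandwich[OF _ _ tendsto_const tendsto_divide_zero[OF assms(3), of c]])
  show "\<forall>\<^sub>F n in sequentially. 0 \<le> cond_pr (M n) (A n) (E n)"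
    by (simp add: cond_pr_def)
  show "\<forall>\<^sub>F n in sequentially. cond_pr (M n) (A n) (E n) \<le> measure (M n) (A n) / c"
    using assms(5)
  proof eventually_elim
    case (elim n)
    then obtain B where B: "B \<in> sets (M n)" "B \<subseteq> E n" "c \<le> measure (M n) B" by blast
    then have "cond_pr (M n) (A n) (E n) \<le> measure (M n) (A n) / measure (M n) B"
      using assms(1,2,4) by (intro cond_pr_le) auto
    also have "\<dots> \<le> measure (M n) (A n) / c"
      using B(3) assms(4) by (intro divide_left_mono) auto
    finally show ?case .
  qed
qed

theorem lemma4:
  fixes X :: "nat \<Rightarrow> nat \<Rightarrow> real^'p"
    and \<beta> :: "real^'p"
    and \<sigma>2 \<alpha>0 :: real
    and f :: "nat \<Rightarrow> (nat \<Rightarrow> real) \<Rightarrow> real"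
  assumes "\<sigma>2 > 0"
    and "0 < \<alpha>0" "\<alpha>0 < 1"
    and "\<And>n. n \<ge> CARD('p) + 2 \<Longrightarrow> full_col_rank n (X n)"
    and "\<And>n. f n \<in> borel_measurable (Ydist n (X n) \<beta> \<sigma>2)"
    and "\<And>\<epsilon>. \<epsilon> > 0 \<Longrightarrow>
      (\<lambda>n. measure (Ydist n (X n) \<beta> \<sigma>2) {y \<in> space (Ydist n (X n) \<beta> \<sigma>2). f n y > \<epsilon>})
        \<longlonglongrightarrow> 0"
  shows "\<forall>\<epsilon>>0. (\<lambda>n. cond_pr (Ydist n (X n) \<beta> \<sigma>2)
            {y \<in> space (Ydist n (X n) \<beta> \<sigma>2). f n y > \<epsilon>} (E1 n (X n) \<beta> \<sigma>2 \<alpha>0))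
          \<longlonglongrightarrow> 0"
proof (intro allI impI)
  fix \<epsilon> :: real
  assume "\<epsilon> > 0"
  obtain c where "c > 0" and power: "\<forall>\<^sub>F n in sequentially. \<exists>B\<in>sets (Ydist n (X n) \<beta> \<sigma>2).
      B \<subseteq> E1 n (X n) \<beta> \<sigma>2 \<alpha>0 \<and> c \<le> measure (Ydist n (X n) \<beta> \<sigma>2) B"
    using F_test_power_eventually_ge[OF assms(1-4)] by blast
  show "(\<lambda>n. cond_pr (Ydist n (X n) \<beta> \<sigma>2)
      {y \<in> space (Ydist n (X n) \<beta> \<sigma>2). f n y > \<epsilon>} (E1 n (X n) \<beta> \<sigma>2 \<alpha>0)) \<longlonglongrightarrow> 0"
  proof (rule cond_pr_tendsto_0[OF _ _ assms(6)[OF \<open>\<epsilon> > 0\<close>] \<open>c > 0\<close> power])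
    show "prob_space (Ydist n (X n) \<beta> \<sigma>2)" for n
      using assms(1) by (rule prob_space_Ydist)
    show "{y \<in> space (Ydist n (X n) \<beta> \<sigma>2). f n y > \<epsilon>} \<in> sets (Ydist n (X n) \<beta> \<sigma>2)" for n
      using assms(5)[of n] by (simp add: borel_measurable_iff_greater)
  qed
qed

end
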